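(* Let $E$ be a finite set, $\mathcal{Q}\subseteq 2^E$ a weakly Rayleigh set-system, and $A,B\in\mathcal{Q}$ with $A\cap B=\varnothing$. For every two-element set $\{e,f\}\subseteq B$ and every $g\in A$, at least one of $\mathcal{Q}^f_{eg}$ or $\mathcal{Q}^e_{fg}$ is nonempty.
   Context: For $\omega:2^E\to[0,\infty)$ not identically zero, $Z(\omega;\mathbf{y})=\sum_S\omega(S)\prod_{e\in S}y_e$; with subscripts denoting partial derivatives, $Z$ is Rayleigh if $Z_eZ_f-Z_{ef}Z\ge0$ for all distinct $e,f$ and all positive $\mathbf{y}$. $\mathcal{Q}$ is weakly Rayleigh if some $\omega\ge0$ with $\{S:\omega(S)>0\}=\mathcal{Q}$ has $Z(\omega;\mathbf{y})$ Rayleigh. Notation: $\mathcal{Q}^f_{eg}=\{S\setminus\{e,g\}: S\in\mathcal{Q},\ e,g\in S,\ f\notin S\}$, and similarly $\mathcal{Q}^e_{fg}$. *)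

theory Defs
  imports "HOL-Analysis.Analysis"
begin

definition genpoly :: "'a set \<Rightarrow> ('a set \<Rightarrow> real) \<Rightarrow> ('a \<Rightarrow> real) \<Rightarrow> real" where
  "genpoly E \<omega> y = (\<Sum>S\<in>Pow E. \<omega> S * (\<Prod>e\<in>S. y e))"

definition pdiff :: "'a \<Rightarrow> (('a \<Rightarrow> real) \<Rightarrow> real) \<Rightarrow> ('a \<Rightarrow> real) \<Rightarrow> real" where
  "pdiff e F y = deriv (\<lambda>t. F (y(e := t))) (y e)"

definition rayleigh :: "'a set \<Rightarrow> (('a \<Rightarrow> real) \<Rightarrow> real) \<Rightarrow> bool" where
  "rayleigh E Z \<longleftrightarrow>
     (\<forall>e\<in>E. \<forall>f\<in>E. e \<noteq> f \<longrightarrow> (\<forall>y. (\<forall>x\<in>E. y x > 0) \<longrightarrow>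
        pdiff e Z y * pdiff f Z y - pdiff e (pdiff f Z) y * Z y \<ge> 0))"

definition weakly_rayleigh :: "'a set \<Rightarrow> 'a set set \<Rightarrow> bool" where
  "weakly_rayleigh E Q \<longleftrightarrow> Q \<subseteq> Pow E \<and>
     (\<exists>\<omega>. (\<forall>S\<in>Pow E. \<omega> S \<ge> 0) \<and> (\<exists>S\<in>Pow E. \<omega> S \<noteq> 0) \<and>
          {S\<in>Pow E. \<omega> S > 0} = Q \<and> rayleigh E (genpoly E \<omega>))"

text \<open>Q^f_{eg} = { S - {e,g} : S in Q, e,g in S, f notin S }.\<close>
definition minor_sys :: "'a set set \<Rightarrow> 'a \<Rightarrow> 'a \<Rightarrow> 'a \<Rightarrow> 'a set set" where
  "minor_sys Q f e g = {S - {e, g} | S. S \<in> Q \<and> e \<in> S \<and> g \<in> S \<and> f \<notin> S}"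

end

theory Submission imports Defs begin

text \<open>Suppose both minors are empty, i.e. among the sets of \<open>Q\<close> containing \<open>g\<close>, those containing
  \<open>e\<close> are exactly those containing \<open>f\<close>. Evaluate the Rayleigh difference at \<open>y = 1\<close> except
  \<open>y\<^sub>g = t\<close>: it becomes a quadratic in \<open>t\<close> whose linear coefficient is at most
  \<open>-\<omega>(B) \<omega>(A) < 0\<close> and whose quadratic coefficient is \<open>\<le> 0\<close>, so it is negative for large \<open>t\<close>.\<close>

definition mass :: "'a set \<Rightarrow> ('a set \<Rightarrow> real) \<Rightarrow> ('a set \<Rightarrow> bool) \<Rightarrow> real" where
  "mass E \<omega> P = (\<Sum>S\<in>Pow E. if P S then \<omega> S else 0)"

lemma mass_cong:
  assumes "\<And>S. S \<subseteq> E \<Longrightarrow> \<omega> S \<noteq> 0 \<Longrightarrow> P S \<longleftrightarrow> P' S"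
  shows "mass E \<omega> P = mass E \<omega> P'"
  unfolding mass_def by (rule sum.cong) (use assms in auto)

lemma mass_mono:
  assumes "\<And>S. S \<subseteq> E \<Longrightarrow> \<omega> S \<ge> 0" and "\<And>S. P S \<Longrightarrow> P' S"
  shows "mass E \<omega> P \<le> mass E \<omega> P'"
  unfolding mass_def by (rule sum_mono) (use assms in auto)

lemma mass_nonneg:
  assumes "\<And>S. S \<subseteq> E \<Longrightarrow> \<omega> S \<ge> 0"
  shows "0 \<le> mass E \<omega> P"
  unfolding mass_def by (rule sum_nonneg) (use assms in auto)

lemma mass_union_inter:
  "mass E \<omega> P + mass E \<omega> P' = mass E \<omega> (\<lambda>S. P S \<or> P' S) + mass E \<omega> (\<lambda>S. P S \<and> P' S)"
  unfolding mass_def sum.distrib[symmetric] by (rule sum.cong) auto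

lemma mass_split:
  "mass E \<omega> P = mass E \<omega> (\<lambda>S. P S \<and> P' S) + mass E \<omega> (\<lambda>S. P S \<and> \<not> P' S)"
  unfolding mass_def sum.distrib[symmetric] by (rule sum.cong) auto

lemma mass_ge_member:
  assumes "finite E" "\<And>S. S \<subseteq> E \<Longrightarrow> \<omega> S \<ge> 0" "A \<subseteq> E" "P A"
  shows "\<omega> A \<le> mass E \<omega> P"
proof -
  have "(if P A then \<omega> A else 0) \<le> mass E \<omega> P"
    unfolding mass_def by (rule member_le_sum) (use assms in auto)
  with assms(4) show ?thesis by simp
qed

lemma mass_restrict:
  "mass E (\<lambda>S. if P S then \<omega> S else 0) P' = mass E \<omega> (\<lambda>S. P S \<and> P' S)"
  unfolding mass_def by (rule sum.cong) auto

lemma genpoly_fun_upd: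
  assumes "finite E"
  shows "genpoly E c (y(e := t)) =
    t * genpoly E (\<lambda>S. if e \<in> S then c S else 0) (y(e := 1)) + genpoly E (\<lambda>S. if e \<notin> S then c S else 0) y"
  unfolding genpoly_def sum_distrib_left sum.distrib[symmetric]
proof (rule sum.cong[OF refl])
  fix S assume "S \<in> Pow E"
  then have "finite S" using assms finite_subset by blast
  show "c S * (\<Prod>x\<in>S. (y(e := t)) x) =
    t * ((if e \<in> S then c S else 0) * (\<Prod>x\<in>S. (y(e := 1)) x)) + (if e \<notin> S then c S else 0) * (\<Prod>x\<in>S. y x)"
  proof (cases "e \<in> S")
    case True
    have "(\<Prod>x\<in>S. (y(e := a)) x) = a * (\<Prod>x\<in>S - {e}. y x)" for a :: real
    proof -
      have "(\<Prod>x\<in>S - {e}. (y(e := a)) x) = (\<Prod>x\<in>S - {e}. y x)"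
        by (rule prod.cong) auto
      then show ?thesis using prod.remove[OF \<open>finite S\<close> True, of "y(e := a)"] by simp
    qed
    then show ?thesis using True by simp
  next
    case False
    then have "(\<Prod>x\<in>S. (y(e := t)) x) = (\<Prod>x\<in>S. y x)"
      by (intro prod.cong) auto
    with False show ?thesis by simp
  qed
qed

lemma pdiff_genpoly:
  assumes "finite E"
  shows "pdiff e (genpoly E c) y = genpoly E (\<lambda>S. if e \<in> S then c S else 0) (y(e := 1))"
proof -
  define slope where "slope = genpoly E (\<lambda>S. if e \<in> S then c S else 0) (y(e := 1))"
  have "((\<lambda>t. t * slope + genpoly E (\<lambda>S. if e \<notin> S then c S else 0) y) has_field_derivative slope) (at (y e))"
    by (auto intro!: derivative_eq_intros)
  moreover have "(\<lambda>t. genpoly E c (y(e := t))) = (\<lambda>t. t * slope + genpoly E (\<lambda>S. if e \<notin> S then c S else 0) y)"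
    unfolding slope_def by (intro ext genpoly_fun_upd[OF assms])
  ultimately have "((\<lambda>t. genpoly E c (y(e := t))) has_field_derivative slope) (at (y e))"
    by simp
  then show ?thesis unfolding pdiff_def slope_def by (rule DERIV_imp_deriv)
qed

lemma pdiff_fun_upd_other:
  assumes "e \<noteq> f"
  shows "pdiff f (\<lambda>y. F (y(e := a))) y = pdiff f F (y(e := a))"
  using assms unfolding pdiff_def by (simp add: fun_upd_twist)

lemma genpoly_ones_upd:
  assumes "finite E"
  shows "genpoly E c ((\<lambda>_. 1)(g := t)) = t * mass E c (\<lambda>S. g \<in> S) + mass E c (\<lambda>S. g \<notin> S)"
proof -
  have ones: "genpoly E (\<lambda>S. if P S then c S else 0) (\<lambda>_. 1) = mass E c P" for P
    unfolding genpoly_def mass_def by simp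
  have "((\<lambda>_. 1) :: 'a \<Rightarrow> real)(g := 1) = (\<lambda>_. 1)"
    by auto
  then show ?thesis
    using genpoly_fun_upd[OF assms, of c "\<lambda>_. 1" g t] ones[of "\<lambda>S. g \<in> S"] ones[of "\<lambda>S. g \<notin> S"]
    by simp
qed

lemma rayleigh_ineq_ones_upd:
  fixes E :: "'a set" and \<omega> :: "'a set \<Rightarrow> real"
  defines "M \<equiv> mass E \<omega>"
  assumes "finite E" "rayleigh E (genpoly E \<omega>)"
    and "e \<in> E" "f \<in> E" "e \<noteq> f" "g \<noteq> e" "g \<noteq> f" "t > 0"
  shows "(t * M (\<lambda>S. e \<in> S \<and> f \<in> S \<and> g \<in> S) + M (\<lambda>S. e \<in> S \<and> f \<in> S \<and> g \<notin> S)) *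
           (t * M (\<lambda>S. g \<in> S) + M (\<lambda>S. g \<notin> S))
         \<le> (t * M (\<lambda>S. e \<in> S \<and> g \<in> S) + M (\<lambda>S. e \<in> S \<and> g \<notin> S)) *
           (t * M (\<lambda>S. f \<in> S \<and> g \<in> S) + M (\<lambda>S. f \<in> S \<and> g \<notin> S))"
proof -
  define y :: "'a \<Rightarrow> real" where "y = (\<lambda>_. 1)(g := t)"
  have "\<forall>x\<in>E. y x > 0" using \<open>t > 0\<close> by (simp add: y_def)
  then have "pdiff e (pdiff f (genpoly E \<omega>)) y * genpoly E \<omega> y
      \<le> pdiff e (genpoly E \<omega>) y * pdiff f (genpoly E \<omega>) y"
    using assms(3-6) unfolding rayleigh_def by auto
  moreover have "pdiff f (genpoly E \<omega>) = (\<lambda>y. genpoly E (\<lambda>S. if f \<in> S then \<omega> S else 0) (y(f := 1)))"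
    using pdiff_genpoly[OF assms(2)] by blast
  moreover have "y(e := 1) = y" "y(f := 1) = y"
    using assms(7,8) by (auto simp: y_def)
  ultimately show ?thesis
    using assms(6,7,8) unfolding y_def M_def
    by (simp add: pdiff_genpoly pdiff_fun_upd_other genpoly_ones_upd mass_restrict assms(2) conj_ac)
qed

lemma quadratic_ineq_forces_nonpos:
  fixes a b c d h H :: real
  assumes ineq: "\<And>t. t > 0 \<Longrightarrow> (t * h + c) * (t * H + d) \<le> (t * h + a) * (t * h + b)"
    and "0 \<le> h" "h \<le> H" "a + b \<le> c + d"
  shows "c * (H - h) \<le> 0"
proof (rule ccontr)
  define K where "K = c * (H - h)"
  assume "\<not> c * (H - h) \<le> 0"
  then have "K > 0" by (simp add: K_def)
  define t where "t = (\<bar>a * b - c * d\<bar> + 1) / K"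
  have "t > 0" using \<open>K > 0\<close> by (simp add: t_def)
  have "(t * h + a) * (t * h + b) - (t * h + c) * (t * H + d)
      = (a * b - c * d) + t * h * ((a + b) - (c + d)) + t * t * h * (h - H) - t * K"
    by (simp add: K_def algebra_simps)
  also have "\<dots> \<le> (a * b - c * d) - t * K"
    using assms(2-4) \<open>t > 0\<close>
    by (smt (verit) mult_nonneg_nonneg mult_nonneg_nonpos mult_pos_pos)
  also have "\<dots> < 0"
    using \<open>K > 0\<close> by (simp add: t_def)
  finally show False using ineq[OF \<open>t > 0\<close>] by linarith
qed

lemma rayleigh_mass_product_nonpos:
  fixes E :: "'a set" and \<omega> :: "'a set \<Rightarrow> real"
  defines "M \<equiv> mass E \<omega>"
  assumes "finite E" and nonneg: "\<And>S. S \<subseteq> E \<Longrightarrow> \<omega> S \<ge> 0" and ray: "rayleigh E (genpoly E \<omega>)"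
    and "e \<in> E" "f \<in> E" "e \<noteq> f" "g \<noteq> e" "g \<noteq> f"
    and e_eq: "M (\<lambda>S. e \<in> S \<and> g \<in> S) = M (\<lambda>S. e \<in> S \<and> f \<in> S \<and> g \<in> S)"
    and f_eq: "M (\<lambda>S. f \<in> S \<and> g \<in> S) = M (\<lambda>S. e \<in> S \<and> f \<in> S \<and> g \<in> S)"
  shows "M (\<lambda>S. e \<in> S \<and> f \<in> S \<and> g \<notin> S) * (M (\<lambda>S. g \<in> S) - M (\<lambda>S. e \<in> S \<and> f \<in> S \<and> g \<in> S)) \<le> 0"
proof (rule quadratic_ineq_forces_nonpos)
  fix t :: real assume "t > 0"
  from rayleigh_ineq_ones_upd[OF assms(2) ray assms(5-9) this] e_eq f_eq
  show "(t * M (\<lambda>S. e \<in> S \<and> f \<in> S \<and> g \<in> S) + M (\<lambda>S. e \<in> S \<and> f \<in> S \<and> g \<notin> S)) *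
          (t * M (\<lambda>S. g \<in> S) + M (\<lambda>S. g \<notin> S))
        \<le> (t * M (\<lambda>S. e \<in> S \<and> f \<in> S \<and> g \<in> S) + M (\<lambda>S. e \<in> S \<and> g \<notin> S)) *
          (t * M (\<lambda>S. e \<in> S \<and> f \<in> S \<and> g \<in> S) + M (\<lambda>S. f \<in> S \<and> g \<notin> S))"
    unfolding M_def by simp
next
  show "0 \<le> M (\<lambda>S. e \<in> S \<and> f \<in> S \<and> g \<in> S)"
    unfolding M_def by (rule mass_nonneg[OF nonneg])
  show "M (\<lambda>S. e \<in> S \<and> f \<in> S \<and> g \<in> S) \<le> M (\<lambda>S. g \<in> S)"
    unfolding M_def by (rule mass_mono[OF nonneg]) auto
  have "M (\<lambda>S. (e \<in> S \<and> g \<notin> S) \<and> (f \<in> S \<and> g \<notin> S)) = M (\<lambda>S. e \<in> S \<and> f \<in> S \<and> g \<notin> S)"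
    unfolding M_def by (rule mass_cong) auto
  moreover have "M (\<lambda>S. e \<in> S \<and> g \<notin> S \<or> f \<in> S \<and> g \<notin> S) \<le> M (\<lambda>S. g \<notin> S)"
    unfolding M_def by (rule mass_mono[OF nonneg]) auto
  ultimately show "M (\<lambda>S. e \<in> S \<and> g \<notin> S) + M (\<lambda>S. f \<in> S \<and> g \<notin> S)
      \<le> M (\<lambda>S. e \<in> S \<and> f \<in> S \<and> g \<notin> S) + M (\<lambda>S. g \<notin> S)"
    using mass_union_inter[of E \<omega> "\<lambda>S. e \<in> S \<and> g \<notin> S" "\<lambda>S. f \<in> S \<and> g \<notin> S"]
    unfolding M_def by linarith
qed

theorem lemma4p5:
  fixes E :: "'a set" and Q :: "'a set set" and A B :: "'a set" and e f g :: 'a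
  assumes "finite E"
    and "weakly_rayleigh E Q"
    and "A \<in> Q" and "B \<in> Q" and "A \<inter> B = {}"
    and "e \<in> B" and "f \<in> B" and "e \<noteq> f"
    and "g \<in> A"
  shows "minor_sys Q f e g \<noteq> {} \<or> minor_sys Q e f g \<noteq> {}"
proof (rule ccontr)
  assume "\<not> ?thesis"
  then have closed: "S \<in> Q \<Longrightarrow> g \<in> S \<Longrightarrow> e \<in> S \<longleftrightarrow> f \<in> S" for S
    unfolding minor_sys_def by blast
  obtain \<omega> where "\<forall>S\<in>Pow E. \<omega> S \<ge> 0" and supp: "{S\<in>Pow E. \<omega> S > 0} = Q"
    and ray: "rayleigh E (genpoly E \<omega>)"
    using assms(2) unfolding weakly_rayleigh_def by blast
  then have nonneg: "\<And>S. S \<subseteq> E \<Longrightarrow> \<omega> S \<ge> 0" by blast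
  let ?M = "mass E \<omega>"
  have in_Q: "S \<in> Q" if "S \<subseteq> E" "\<omega> S \<noteq> 0" for S
    using nonneg[of S] that supp by force
  have "A \<subseteq> E" "B \<subseteq> E" "\<omega> A > 0" "\<omega> B > 0"
    using supp assms(3,4) by auto
  have "?M (\<lambda>S. e \<in> S \<and> f \<in> S \<and> g \<notin> S) * (?M (\<lambda>S. g \<in> S) - ?M (\<lambda>S. e \<in> S \<and> f \<in> S \<and> g \<in> S)) \<le> 0"
  proof (rule rayleigh_mass_product_nonpos[OF assms(1) nonneg ray])
    show "?M (\<lambda>S. e \<in> S \<and> g \<in> S) = ?M (\<lambda>S. e \<in> S \<and> f \<in> S \<and> g \<in> S)"
      "?M (\<lambda>S. f \<in> S \<and> g \<in> S) = ?M (\<lambda>S. e \<in> S \<and> f \<in> S \<and> g \<in> S)"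
      by (rule mass_cong; use closed in_Q in blast)+
  qed (use assms(5-9) \<open>B \<subseteq> E\<close> in auto)
  moreover have "\<omega> B \<le> ?M (\<lambda>S. e \<in> S \<and> f \<in> S \<and> g \<notin> S)"
    using assms(5-7,9) \<open>B \<subseteq> E\<close> by (intro mass_ge_member[OF assms(1) nonneg]) auto
  moreover have "\<omega> A \<le> ?M (\<lambda>S. g \<in> S \<and> \<not> (e \<in> S \<and> f \<in> S))"
    using assms(5,6,9) \<open>A \<subseteq> E\<close> by (intro mass_ge_member[OF assms(1) nonneg]) auto
  then have "\<omega> A \<le> ?M (\<lambda>S. g \<in> S) - ?M (\<lambda>S. e \<in> S \<and> f \<in> S \<and> g \<in> S)"
    using mass_split[of E \<omega> "\<lambda>S. g \<in> S" "\<lambda>S. e \<in> S \<and> f \<in> S"] by (simp add: conj_ac)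
  ultimately show False
    using \<open>\<omega> A > 0\<close> \<open>\<omega> B > 0\<close> mult_pos_pos[of "?M (\<lambda>S. e \<in> S \<and> f \<in> S \<and> g \<notin> S)"
      "?M (\<lambda>S. g \<in> S) - ?M (\<lambda>S. e \<in> S \<and> f \<in> S \<and> g \<in> S)"] by linarith
qed

end
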